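(* For every integer $m\geq 3$, the graph $C[m]\times P[2]$ is antimagic.
   Context: All graphs are finite, undirected and simple. $C[m]$ denotes the cycle on $m$ vertices and $P[2]$ the path on $2$ vertices (a single edge). The Cartesian product $G_1\times G_2$ of graphs $G_1=(V_1,E_1)$ and $G_2=(V_2,E_2)$ has vertex set $V_1\times V_2$, with $(u_1,u_2)$ adjacent to $(v_1,v_2)$ iff either $u_1=v_1$ and $u_2v_2\in E_2$, or $u_2=v_2$ and $u_1v_1\in E_1$. An antimagic labeling of a graph with $m'$ edges is a bijection $f$ from its edge set to $\{1,\ldots,m'\}$ such that the vertex sums $f^+(v)=\sum_{e\ni v} f(e)$ (sum over edges incident with $v$) are pairwise distinct over all vertices $v$. A graph is antimagic if it admits an antimagic labeling. *)

theory Defs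
  imports Main
begin

text \<open>Graphs are given by a finite vertex set V and an edge set E of 2-element subsets of V.\<close>

definition vertex_sum :: "'a set set \<Rightarrow> ('a set \<Rightarrow> nat) \<Rightarrow> 'a \<Rightarrow> nat" where
  "vertex_sum E f v = (\<Sum>e\<in>{e\<in>E. v \<in> e}. f e)"

definition antimagic_labeling :: "'a set \<Rightarrow> 'a set set \<Rightarrow> ('a set \<Rightarrow> nat) \<Rightarrow> bool" where
  "antimagic_labeling V E f \<longleftrightarrow>
     bij_betw f E {1..card E} \<and> inj_on (vertex_sum E f) V"

definition antimagic :: "'a set \<Rightarrow> 'a set set \<Rightarrow> bool" where
  "antimagic V E \<longleftrightarrow> (\<exists>f. antimagic_labeling V E f)"

definition cycle_edges :: "nat \<Rightarrow> nat set set" where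
  "cycle_edges m = {{i, (i + 1) mod m} | i. i < m}"

definition path2_edges :: "nat set set" where
  "path2_edges = {{0, 1}}"

definition cart_prod_vertices :: "'a set \<Rightarrow> 'b set \<Rightarrow> ('a \<times> 'b) set" where
  "cart_prod_vertices V1 V2 = V1 \<times> V2"

definition cart_prod_edges ::
  "'a set \<Rightarrow> 'a set set \<Rightarrow> 'b set \<Rightarrow> 'b set set \<Rightarrow> ('a \<times> 'b) set set" where
  "cart_prod_edges V1 E1 V2 E2 =
     {{(u1, u2), (v1, v2)} | u1 u2 v1 v2.
        u1 \<in> V1 \<and> u2 \<in> V2 \<and> v1 \<in> V1 \<and> v2 \<in> V2 \<and>
        ((u1 = v1 \<and> {u2, v2} \<in> E2) \<or> (u2 = v2 \<and> {u1, v1} \<in> E1))}"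

end

theory Submission
  imports Defs
begin

(* Enumerate the edges of the prism C[m] x P[2] as the outer rim edges {i, i+1} (i < m), then the
   spokes in reverse order, then the inner rim edges, and give the k-th edge the label k.  Vertex i
   of the outer cycle then has sum (i + 1) + i + (2m - i) = 2m + 1 + i for i > 0, and 3m + 1 for
   i = 0, so the outer sums are exactly 2m+2, ..., 3m+1; the inner labels are the outer ones
   shifted by 2m, so the inner sums are the outer ones shifted by 4m and cannot collide with them. *)

lemma vertex_sum_inv_into:
  assumes "inj_on g A"
  shows "vertex_sum (g ` A) (inv_into A g) v = \<Sum>{k\<in>A. v \<in> g k}"
proof -
  have "{e \<in> g ` A. v \<in> e} = g ` {k\<in>A. v \<in> g k}" by auto
  moreover have "inj_on g {k\<in>A. v \<in> g k}" using assms by (rule inj_on_subset) auto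
  ultimately show ?thesis
    using assms by (simp add: vertex_sum_def sum.reindex)
qed

lemma antimagic_by_enumeration:
  fixes g :: "nat \<Rightarrow> 'a set"
  assumes "inj_on g {1..n}" "E = g ` {1..n}"
    and "inj_on (\<lambda>v. \<Sum>{k\<in>{1..n}. v \<in> g k}) V"
  shows "antimagic V E"
proof -
  have "bij_betw (inv_into {1..n} g) E {1..card E}"
    using assms(1,2) by (simp add: bij_betw_inv_into inj_on_imp_bij_betw card_image)
  moreover have "vertex_sum E (inv_into {1..n} g) = (\<lambda>v. \<Sum>{k\<in>{1..n}. v \<in> g k})"
    using assms(1,2) by (simp add: fun_eq_iff vertex_sum_inv_into)
  ultimately show ?thesis
    using assms(3) unfolding antimagic_def antimagic_labeling_def by auto
qed

definition cycle_succ :: "nat \<Rightarrow> nat \<Rightarrow> nat" where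
  "cycle_succ m i = (if Suc i = m then 0 else Suc i)"

lemma Suc_mod_eq_cycle_succ: "i < m \<Longrightarrow> Suc i mod m = cycle_succ m i"
  by (simp add: cycle_succ_def)

lemma cycle_succ_less: "i < m \<Longrightarrow> cycle_succ m i < m"
  by (simp add: cycle_succ_def)

lemma cycle_edges_eq: "cycle_edges m = {{i, cycle_succ m i} | i. i < m}"
  by (auto simp: cycle_edges_def Suc_mod_eq_cycle_succ)

definition rim_edge :: "nat \<Rightarrow> nat \<Rightarrow> nat \<Rightarrow> (nat \<times> nat) set" where
  "rim_edge m j i = {(i, j), (cycle_succ m i, j)}"

definition spoke_edge :: "nat \<Rightarrow> (nat \<times> nat) set" where
  "spoke_edge i = {(i, 0), (i, 1)}"

lemma rim_edge_eq_iff: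
  assumes "m \<ge> 3" "i < m" "i' < m"
  shows "rim_edge m j i = rim_edge m j' i' \<longleftrightarrow> j = j' \<and> i = i'"
  using assms by (auto simp: rim_edge_def cycle_succ_def doubleton_eq_iff)

lemma spoke_edge_eq_iff: "spoke_edge i = spoke_edge i' \<longleftrightarrow> i = i'"
  by (auto simp: spoke_edge_def doubleton_eq_iff)

lemma rim_edge_neq_spoke_edge: "rim_edge m j i \<noteq> spoke_edge i'"
  by (auto simp: rim_edge_def spoke_edge_def doubleton_eq_iff)

lemma cycle_path2_edges_eq:
  "cart_prod_edges {0..<m} (cycle_edges m) {0, 1} path2_edges =
     {rim_edge m j i | i j. i < m \<and> j \<le> 1} \<union> spoke_edge ` {..<m}"
proof (intro set_eqI iffI)
  fix x assume "x \<in> cart_prod_edges {0..<m} (cycle_edges m) {0, 1} path2_edges"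
  then show "x \<in> {rim_edge m j i | i j. i < m \<and> j \<le> 1} \<union> spoke_edge ` {..<m}"
    unfolding cart_prod_edges_def cycle_edges_eq path2_edges_def
    by (auto simp: rim_edge_def spoke_edge_def doubleton_eq_iff insert_commute)
next
  fix x assume "x \<in> {rim_edge m j i | i j. i < m \<and> j \<le> 1} \<union> spoke_edge ` {..<m}"
  then show "x \<in> cart_prod_edges {0..<m} (cycle_edges m) {0, 1} path2_edges"
    unfolding cart_prod_edges_def cycle_edges_eq path2_edges_def rim_edge_def spoke_edge_def
    by (fastforce intro: cycle_succ_less)
qed

definition prism_edge :: "nat \<Rightarrow> nat \<Rightarrow> (nat \<times> nat) set" where
  "prism_edge m k =
     (if k \<le> m then rim_edge m 0 (k - 1)
      else if k \<le> 2 * m then spoke_edge (2 * m - k)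
      else rim_edge m 1 (k - 2 * m - 1))"

lemma prism_edge_image:
  "prism_edge m ` {1..3 * m} = {rim_edge m j i | i j. i < m \<and> j \<le> 1} \<union> spoke_edge ` {..<m}"
proof (intro equalityI subsetI)
  fix x assume "x \<in> prism_edge m ` {1..3 * m}"
  then show "x \<in> {rim_edge m j i | i j. i < m \<and> j \<le> 1} \<union> spoke_edge ` {..<m}"
    by (fastforce simp: prism_edge_def split: if_splits)
next
  fix x assume "x \<in> {rim_edge m j i | i j. i < m \<and> j \<le> 1} \<union> spoke_edge ` {..<m}"
  then consider i where "i < m" "x = rim_edge m 0 i" | i where "i < m" "x = spoke_edge i"
    | i where "i < m" "x = rim_edge m 1 i"
    by (auto simp: le_Suc_eq)
  then show "x \<in> prism_edge m ` {1..3 * m}"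
  proof cases
    case 1
    then have "x = prism_edge m (i + 1)" by (simp add: prism_edge_def)
    with 1 show ?thesis by force
  next
    case 2
    then have "\<not> 2 * m - i \<le> m" "2 * m - (2 * m - i) = i" by arith+
    with 2 have "x = prism_edge m (2 * m - i)" by (simp add: prism_edge_def)
    with 2 show ?thesis by force
  next
    case 3
    then have "x = prism_edge m (2 * m + i + 1)" by (simp add: prism_edge_def)
    with 3 show ?thesis by force
  qed
qed

lemma inj_on_prism_edge:
  assumes "m \<ge> 3" shows "inj_on (prism_edge m) {1..3 * m}"
  using assms
  by (auto intro!: inj_onI simp: prism_edge_def rim_edge_eq_iff spoke_edge_eq_iff
      rim_edge_neq_spoke_edge rim_edge_neq_spoke_edge[symmetric] split: if_splits)

lemma prism_edge_labels_at:
  assumes "m \<ge> 3" "i < m" "j \<le> 1"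
  shows "{k \<in> {1..3 * m}. (i, j) \<in> prism_edge m k} =
           {2 * m * j + i + 1, 2 * m * j + (if i = 0 then m else i), 2 * m - i}"
proof -
  consider "j = 0" | "j = 1" using assms(3) by linarith
  then show ?thesis
    using assms(1,2)
    by cases (cases "i = 0";
        auto simp: prism_edge_def rim_edge_def spoke_edge_def cycle_succ_def split: if_splits)+
qed

lemma prism_vertex_label_sum:
  assumes "m \<ge> 3" "i < m" "j \<le> 1"
  shows "\<Sum>{k \<in> {1..3 * m}. (i, j) \<in> prism_edge m k} =
           2 * m + 1 + 4 * m * j + (if i = 0 then m else i)"
  unfolding prism_edge_labels_at[OF assms] using assms by (auto simp: le_Suc_eq)

lemma inj_on_prism_vertex_label_sum:
  assumes "m \<ge> 3"
  shows "inj_on (\<lambda>v. \<Sum>{k \<in> {1..3 * m}. v \<in> prism_edge m k}) ({0..<m} \<times> {0, 1})"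
proof (rule inj_onI)
  fix v v'
  assume "v \<in> {0..<m} \<times> {0, 1}" "v' \<in> {0..<m} \<times> {0, 1}"
    and sums_eq: "\<Sum>{k \<in> {1..3 * m}. v \<in> prism_edge m k} =
                  \<Sum>{k \<in> {1..3 * m}. v' \<in> prism_edge m k}"
  then obtain i j i' j' where v: "v = (i, j)" "i < m" "j \<le> 1"
    and v': "v' = (i', j')" "i' < m" "j' \<le> 1"
    by auto
  have "4 * m * j + (if i = 0 then m else i) = 4 * m * j' + (if i' = 0 then m else i')"
    using sums_eq prism_vertex_label_sum[OF assms v(2,3)] prism_vertex_label_sum[OF assms v'(2,3)]
    unfolding v(1) v'(1) by linarith
  with v v' show "v = v'"
    by (auto simp: le_Suc_eq split: if_splits)
qed

theorem lemma4p2: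
  fixes m :: nat
  assumes "m \<ge> 3"
  shows "antimagic (cart_prod_vertices {0..<m} {0, 1})
                   (cart_prod_edges {0..<m} (cycle_edges m) {0, 1} path2_edges)"
  unfolding cart_prod_vertices_def cycle_path2_edges_eq prism_edge_image[symmetric]
  by (rule antimagic_by_enumeration[OF inj_on_prism_edge[OF assms] refl
        inj_on_prism_vertex_label_sum[OF assms]])

end
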